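(* Let $m,n\in\mathbb N$. Then for all Banach spaces $X,Y$ and all bounded linear operators $T:X\to Y$, $$\tau(T|\mathcal H(\mathbb D_{m+1}^{m+n}))\le\tau(T|\mathcal H(\mathbb D_1^n)).$$
   Context: Dyadic intervals: $\Delta_k^{(j)}:=[\frac{j-1}{2^k},\frac{j}{2^k})$. Haar functions: for $k\ge1$, integer $j$, $\chi_k^{(j)}(t)=+2^{(k-1)/2}$ on $\Delta_k^{(2j-1)}$, $-2^{(k-1)/2}$ on $\Delta_k^{(2j)}$, $0$ otherwise, $t\in[0,1)$. $\mathbb D_m^n:=\{(k,j):k=m,\dots,n;\ j=1,\dots,2^{k-1}\}$. For a finite set $\mathbb F$ of such indices and bounded linear $T:X\to Y$, $\tau(T|\mathcal H(\mathbb F))$ is the least $c\ge0$ such that $\|\sum_{(k,j)\in\mathbb F}Tx_k^{(j)}\chi_k^{(j)}|L_2\|\le c(\sum_{(k,j)\in\mathbb F}\|x_k^{(j)}\|^2)^{1/2}$ for all $x_k^{(j)}\in X$, where $\|\cdot|L_2\|$ is the Bochner $L_2([0,1),Y)$ norm. *)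

theory Defs
  imports "HOL-Analysis.Analysis"
begin

definition dyadic_interval :: "nat \<Rightarrow> int \<Rightarrow> real set" where
  "dyadic_interval k j = {real_of_int (j - 1) / 2 ^ k ..< real_of_int j / 2 ^ k}"

definition haar :: "nat \<Rightarrow> int \<Rightarrow> real \<Rightarrow> real" where
  "haar k j t =
     (if t \<in> {0..<1} \<and> t \<in> dyadic_interval k (2 * j - 1) then 2 powr ((real k - 1) / 2)
      else if t \<in> {0..<1} \<and> t \<in> dyadic_interval k (2 * j) then - (2 powr ((real k - 1) / 2))
      else 0)"

definition dyadic_index :: "nat \<Rightarrow> nat \<Rightarrow> (nat \<times> int) set" where
  "dyadic_index m n = {(k, j). m \<le> k \<and> k \<le> n \<and> 1 \<le> j \<and> j \<le> 2 ^ (k - 1)}"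

definition L2_norm01 :: "(real \<Rightarrow> 'b::real_normed_vector) \<Rightarrow> real" where
  "L2_norm01 f = sqrt (LINT t : {0..<1} | lborel. (norm (f t))\<^sup>2)"

definition haar_tau ::
  "('a::real_normed_vector \<Rightarrow> 'b::real_normed_vector) \<Rightarrow> (nat \<times> int) set \<Rightarrow> real" where
  "haar_tau T F = Inf {c. c \<ge> 0 \<and>
     (\<forall>x :: nat \<times> int \<Rightarrow> 'a.
        L2_norm01 (\<lambda>t. \<Sum>(k, j)\<in>F. haar k j t *\<^sub>R T (x (k, j)))
          \<le> c * sqrt (\<Sum>(k, j)\<in>F. (norm (x (k, j)))\<^sup>2))}"

end

theory Submission
  imports Defs
begin

(* Haar functions of levels m+1, ..., m+n split into 2^m blocks indexed by i < 2^m: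
   chi_(m+k)^(i 2^(k-1) + j) (t) = 2^(m/2) chi_k^(j) (2^m t - i), so the i-th block of a Haar sum
   over D_(m+1)^(m+n) is a dilated and translated Haar sum over D_1^n, supported in
   [i/2^m, (i+1)/2^m).  Since the supports are disjoint and the change of variables s = 2^m t - i
   absorbs the factor 2^m, the squared L2 norm of the whole sum is the sum over the blocks of the
   squared L2 norms of the block sums; the squared l2 norm of the coefficients splits the same way.
   Hence every constant admissible for D_1^n is admissible for D_(m+1)^(m+n), and the infimum over
   the larger set of admissible constants is smaller. *)

lemma floor_pow2_mult_div:
  fixes x :: real
  assumes "k \<le> N"
  shows "\<lfloor>2 ^ k * x\<rfloor> = \<lfloor>2 ^ N * x\<rfloor> div 2 ^ (N - k)"
proof -
  have "(2::real) ^ N = 2 ^ k * 2 ^ (N - k)" using assms by (simp flip: power_add)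
  then have "2 ^ k * x = (2 ^ N * x) / real_of_int (2 ^ (N - k))" by simp
  then show ?thesis using floor_divide_real_eq_div[of "2 ^ (N - k)" "2 ^ N * x"] by simp
qed

lemma dyadic_interval_iff_floor: "t \<in> dyadic_interval k q \<longleftrightarrow> \<lfloor>2 ^ k * t\<rfloor> = q - 1"
proof -
  have "t \<in> dyadic_interval k q \<longleftrightarrow> real_of_int (q - 1) \<le> 2 ^ k * t \<and> 2 ^ k * t < real_of_int q"
    by (simp add: dyadic_interval_def field_simps)
  also have "\<dots> \<longleftrightarrow> \<lfloor>2 ^ k * t\<rfloor> = q - 1" by (simp add: floor_eq_iff)
  finally show ?thesis .
qed

lemma dyadic_interval_subset_unit:
  assumes "1 \<le> q" "q \<le> 2 ^ k"
  shows "dyadic_interval k q \<subseteq> {0..<1}"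
proof
  fix t assume "t \<in> dyadic_interval k q"
  then have "real_of_int (q - 1) \<le> 2 ^ k * t" "2 ^ k * t < real_of_int q"
    by (auto simp: dyadic_interval_def field_simps)
  moreover have "real_of_int q \<le> 2 ^ k" using assms(2) by (metis of_int_le_iff of_int_numeral of_int_power)
  ultimately have "2 ^ k * 0 \<le> 2 ^ k * t" "2 ^ k * t < 2 ^ k * (1::real)" using assms(1) by linarith+
  then show "t \<in> {0..<1}" by (simp only: mult_le_cancel_left_pos mult_less_cancel_left_pos zero_less_power) simp
qed

lemma dyadic_interval_dilate:
  "t \<in> dyadic_interval (m + k) (i * 2 ^ k + q) \<longleftrightarrow> 2 ^ m * t - i \<in> dyadic_interval k q"
  by (simp add: dyadic_interval_def field_simps power_add)

lemma haar_eq_dyadic: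
  assumes "1 \<le> k" "1 \<le> j" "j \<le> 2 ^ (k - 1)"
  shows "haar k j t =
    (if t \<in> dyadic_interval k (2 * j - 1) then 2 powr ((real k - 1) / 2)
     else if t \<in> dyadic_interval k (2 * j) then - (2 powr ((real k - 1) / 2)) else 0)"
proof -
  have "(2::int) ^ k = 2 * 2 ^ (k - 1)" using assms(1) by (simp add: power_eq_if)
  then have "dyadic_interval k (2 * j - 1) \<subseteq> {0..<1}" "dyadic_interval k (2 * j) \<subseteq> {0..<1}"
    using assms(2,3) by (intro dyadic_interval_subset_unit; simp)+
  then show ?thesis unfolding haar_def by auto
qed

lemma haar_dilate:
  assumes k: "1 \<le> k" and i: "0 \<le> i" "i < 2 ^ m" and j: "1 \<le> j" "j \<le> 2 ^ (k - 1)"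
  shows "haar (m + k) (i * 2 ^ (k - 1) + j) t = 2 powr (real m / 2) * haar k j (2 ^ m * t - i)"
proof -
  have pow_k: "(2::int) ^ k = 2 * 2 ^ (k - 1)" using k by (simp add: power_eq_if)
  have "i * 2 ^ (k - 1) + j \<le> (2 ^ m - 1) * 2 ^ (k - 1) + 2 ^ (k - 1)"
    using i j by (intro add_mono mult_right_mono) auto
  also have "\<dots> = 2 ^ (m + (k - 1))" by (simp add: algebra_simps power_add)
  finally have "i * 2 ^ (k - 1) + j \<le> 2 ^ (m + k - 1)" using k by simp
  moreover have "1 \<le> i * 2 ^ (k - 1) + j" using i j by (simp add: add_increasing)
  ultimately have "haar (m + k) (i * 2 ^ (k - 1) + j) t =
    (if t \<in> dyadic_interval (m + k) (i * 2 ^ k + (2 * j - 1)) then 2 powr ((real (m + k) - 1) / 2)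
     else if t \<in> dyadic_interval (m + k) (i * 2 ^ k + 2 * j) then - (2 powr ((real (m + k) - 1) / 2))
     else 0)"
    using k by (simp add: haar_eq_dyadic pow_k algebra_simps)
  moreover have "(2::real) powr ((real (m + k) - 1) / 2) = 2 powr (real m / 2) * 2 powr ((real k - 1) / 2)"
    unfolding powr_add[symmetric] by (simp add: field_simps)
  ultimately show ?thesis using k j by (simp add: haar_eq_dyadic dyadic_interval_dilate)
qed

lemma haar_dyadic_step:
  assumes "k \<le> N"
  shows "haar k j t = haar k j (\<lfloor>2 ^ N * t\<rfloor> / 2 ^ N)"
proof -
  define s where "s = \<lfloor>2 ^ N * t\<rfloor> / (2 ^ N :: real)"
  have "\<lfloor>2 ^ N * s\<rfloor> = \<lfloor>2 ^ N * t\<rfloor>" by (simp add: s_def)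
  then have same: "s \<in> dyadic_interval k' q \<longleftrightarrow> t \<in> dyadic_interval k' q" if "k' \<le> N" for k' q
    using that by (simp add: dyadic_interval_iff_floor floor_pow2_mult_div[of k' N])
  have unit: "{0..<1} = dyadic_interval 0 1" by (simp add: dyadic_interval_def)
  show ?thesis unfolding haar_def unit s_def[symmetric] using same[of k] same[of 0] assms by simp
qed

lemma abs_haar_le: "\<bar>haar k j t\<bar> \<le> 2 powr ((real k - 1) / 2)"
  by (simp add: haar_def)

lemma L2_norm01_nonneg: "0 \<le> L2_norm01 f"
  unfolding L2_norm01_def set_lebesgue_integral_def by (simp add: integral_nonneg)

lemma L2_norm01_eq_lborel:
  assumes "\<And>t. t \<notin> {0..<1} \<Longrightarrow> f t = 0"
  shows "L2_norm01 f = sqrt (\<integral>t. (norm (f t))\<^sup>2 \<partial>lborel)"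
proof -
  have "(\<lambda>t. indicator {0..<1} t *\<^sub>R (norm (f t))\<^sup>2) = (\<lambda>t. (norm (f t))\<^sup>2)"
  proof
    show "indicator {0..<1} t *\<^sub>R (norm (f t))\<^sup>2 = (norm (f t))\<^sup>2" for t
      by (cases "t \<in> {0..<1}") (simp_all add: assms)
  qed
  then show ?thesis unfolding L2_norm01_def set_lebesgue_integral_def by simp
qed

lemma
  fixes f :: "real \<Rightarrow> 'b::real_normed_vector"
  assumes f: "f \<in> borel_measurable lborel" and le: "\<And>t. norm (f t) \<le> indicator {0..<1} t * B"
  shows integrable_norm_power2_if_le_indicator: "integrable lborel (\<lambda>t. (norm (f t))\<^sup>2)"
    and integral_norm_power2_le_if_le_indicator: "(\<integral>t. (norm (f t))\<^sup>2 \<partial>lborel) \<le> B\<^sup>2"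
proof -
  have le2: "(norm (f t))\<^sup>2 \<le> indicator {0..<1} t *\<^sub>R B\<^sup>2" for t
  proof -
    have "(norm (f t))\<^sup>2 \<le> (indicator {0..<1} t * B)\<^sup>2" by (rule power_mono[OF le]) simp
    then show ?thesis by (cases "t \<in> {0..<1}") simp_all
  qed
  have int: "integrable lborel (\<lambda>t. indicator {0..<1::real} t *\<^sub>R B\<^sup>2)"
    by (rule integrable_indicator) auto
  show "integrable lborel (\<lambda>t. (norm (f t))\<^sup>2)"
    by (rule Bochner_Integration.integrable_bound[OF int]) (use f le2 in auto)
  have "(\<integral>t. (norm (f t))\<^sup>2 \<partial>lborel) \<le> (\<integral>t. indicator {0..<1::real} t *\<^sub>R B\<^sup>2 \<partial>lborel)"
    by (rule integral_mono'[OF int le2]) simp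
  then show "(\<integral>t. (norm (f t))\<^sup>2 \<partial>lborel) \<le> B\<^sup>2" by simp
qed

lemma norm_sum_power2_single_support:
  fixes G :: "'i \<Rightarrow> 'b::real_normed_vector"
  assumes "finite A" and "\<And>i. i \<in> A \<Longrightarrow> i \<noteq> a \<Longrightarrow> G i = 0"
  shows "(norm (sum G A))\<^sup>2 = (\<Sum>i\<in>A. (norm (G i))\<^sup>2)"
proof -
  have "sum G A = (\<Sum>i\<in>A. if i = a then G a else 0)"
    and "(\<Sum>i\<in>A. (norm (G i))\<^sup>2) = (\<Sum>i\<in>A. if i = a then (norm (G a))\<^sup>2 else 0)"
    using assms(2) by (auto intro: sum.cong)
  then show ?thesis using assms(1) by simp
qed

definition haar_sum :: "(nat \<times> int) set \<Rightarrow> (nat \<times> int \<Rightarrow> 'b::real_normed_vector) \<Rightarrow> real \<Rightarrow> 'b" where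
  "haar_sum F v t = (\<Sum>(k, j)\<in>F. haar k j t *\<^sub>R v (k, j))"

lemma haar_sum_eq_0: "t \<notin> {0..<1} \<Longrightarrow> haar_sum F v t = 0"
  unfolding haar_sum_def haar_def by (auto intro: sum.neutral)

(* The codomain need not be second countable, so borel_measurable_sum does not apply; instead
   the sum is factored through the countable set of dyadic steps of the finest level. *)
lemma borel_measurable_haar_sum:
  assumes "finite F"
  shows "haar_sum F v \<in> borel_measurable borel"
proof -
  define N where "N = Max (fst ` F)"
  have "k \<le> N" if "(k, j) \<in> F" for k j
    unfolding N_def using assms that by (force intro: Max_ge)
  then have step: "haar_sum F v t = haar_sum F v (\<lfloor>2 ^ N * t\<rfloor> / 2 ^ N)" for t
    unfolding haar_sum_def by (intro sum.cong refl) (auto intro!: haar_dyadic_step)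
  define g where "g q = haar_sum F v (real_of_int q / 2 ^ N)" for q :: int
  have "haar_sum F v = (\<lambda>t. g \<lfloor>2 ^ N * t\<rfloor>)"
    unfolding g_def using step by auto
  also have "\<dots> \<in> borel_measurable borel"
    by (rule measurable_compose[where N = "count_space UNIV"]) simp_all
  finally show ?thesis .
qed

lemma norm_haar_sum_le:
  "norm (haar_sum F v t) \<le> indicator {0..<1} t * (\<Sum>(k, j)\<in>F. 2 powr ((real k - 1) / 2) * norm (v (k, j)))"
proof (cases "t \<in> {0..<1}")
  case True
  have "norm (haar_sum F v t) \<le> (\<Sum>(k, j)\<in>F. norm (haar k j t *\<^sub>R v (k, j)))"
    unfolding haar_sum_def case_prod_beta by (rule norm_sum)
  also have "\<dots> \<le> (\<Sum>(k, j)\<in>F. 2 powr ((real k - 1) / 2) * norm (v (k, j)))"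
    by (auto intro!: sum_mono mult_right_mono abs_haar_le)
  finally show ?thesis using True by simp
qed (simp add: haar_sum_eq_0)

lemma integrable_norm_haar_sum:
  "finite F \<Longrightarrow> integrable lborel (\<lambda>t. (norm (haar_sum F v t))\<^sup>2)"
  by (rule integrable_norm_power2_if_le_indicator[OF _ norm_haar_sum_le])
    (simp add: borel_measurable_haar_sum)

lemma L2_norm01_haar_sum: "L2_norm01 (haar_sum F v) = sqrt (\<integral>t. (norm (haar_sum F v t))\<^sup>2 \<partial>lborel)"
  by (rule L2_norm01_eq_lborel) (rule haar_sum_eq_0)

lemma L2_norm01_haar_sum_le:
  assumes "finite F"
  shows "L2_norm01 (haar_sum F v) \<le> (\<Sum>(k, j)\<in>F. 2 powr ((real k - 1) / 2) * norm (v (k, j)))"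
  (is "_ \<le> ?B")
proof -
  have "L2_norm01 (haar_sum F v) \<le> sqrt (?B\<^sup>2)"
    unfolding L2_norm01_haar_sum
    by (rule real_sqrt_le_mono, rule integral_norm_power2_le_if_le_indicator[OF _ norm_haar_sum_le])
      (simp add: borel_measurable_haar_sum assms)
  also have "\<dots> = ?B" by (simp add: sum_nonneg case_prod_beta)
  finally show ?thesis .
qed

lemma dyadic_index_eq_Sigma: "dyadic_index a b = Sigma {a..b} (\<lambda>k. {1..2 ^ (k - 1)})"
  by (auto simp: dyadic_index_def)

lemma finite_dyadic_index: "finite (dyadic_index a b)"
  by (simp add: dyadic_index_eq_Sigma)

lemma sum_int_blocks:
  fixes g :: "int \<Rightarrow> 'c::comm_monoid_add" and M P :: int
  assumes P: "0 < P"
  shows "(\<Sum>l\<in>{1..M * P}. g l) = (\<Sum>i\<in>{0..<M}. \<Sum>j\<in>{1..P}. g (i * P + j))"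
proof -
  have div_mod: "(i * P + j - 1) div P = i \<and> (i * P + j - 1) mod P = j - 1" if "j \<in> {1..P}" for i j
  proof -
    have "i * P + j - 1 = P * i + (j - 1)" by simp
    then show ?thesis using that by (auto intro: int_div_pos_eq int_mod_pos_eq)
  qed
  have "(\<Sum>l\<in>{1..M * P}. g l) = (\<Sum>(i, j)\<in>{0..<M} \<times> {1..P}. g (i * P + j))"
  proof (rule sum.reindex_bij_witness[where i = "\<lambda>(i, j). i * P + j"
        and j = "\<lambda>l. ((l - 1) div P, (l - 1) mod P + 1)"])
    fix l assume l: "l \<in> {1..M * P}"
    then have "l \<le> M * P" by simp
    then have "(l - 1) div P * P < M * P"
      using div_mult_mod_eq[of "l - 1" P] pos_mod_sign[OF P, of "l - 1"] by linarith
    then have "(l - 1) div P < M" using P by (simp add: mult_less_cancel_right)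
    moreover have "(l - 1) mod P + 1 \<le> P" using pos_mod_bound[OF P, of "l - 1"] by linarith
    ultimately show "((l - 1) div P, (l - 1) mod P + 1) \<in> {0..<M} \<times> {1..P}"
      using l P by (auto simp: pos_imp_zdiv_nonneg_iff)
  next
    fix a assume "a \<in> {0..<M} \<times> {1..P}"
    then obtain i j where a: "a = (i, j)" and i: "0 \<le> i" "i < M" and j: "1 \<le> j" "j \<le> P"
      by auto
    have "i * P + j \<le> (M - 1) * P + P" using i j P by (intro add_mono mult_right_mono) auto
    moreover have "0 \<le> i * P" using i P by simp
    ultimately show "(case a of (i, j) \<Rightarrow> i * P + j) \<in> {1..M * P}"
      using a j by (simp add: algebra_simps)
  qed (use div_mod in auto)
  then show ?thesis by (simp add: sum.cartesian_product)
qed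

definition dyadic_shift :: "nat \<Rightarrow> int \<Rightarrow> nat \<times> int \<Rightarrow> nat \<times> int" where
  "dyadic_shift m i = (\<lambda>(k, j). (m + k, i * 2 ^ (k - 1) + j))"

lemma sum_dyadic_index_shift:
  "(\<Sum>p\<in>dyadic_index (m + 1) (m + n). w p) =
   (\<Sum>i\<in>{0..<2 ^ m}. \<Sum>p\<in>dyadic_index 1 n. w (dyadic_shift m i p))"
proof -
  have "(\<Sum>p\<in>dyadic_index (m + 1) (m + n). w p) = (\<Sum>k\<in>{m + 1..m + n}. \<Sum>l\<in>{1..2 ^ (k - 1)}. w (k, l))"
    by (simp add: dyadic_index_eq_Sigma sum.Sigma)
  also have "\<dots> = (\<Sum>k\<in>{1..n}. \<Sum>l\<in>{1..2 ^ m * 2 ^ (k - 1)}. w (m + k, l))"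
  proof -
    have "(2::int) ^ (m + k - 1) = 2 ^ m * 2 ^ (k - 1)" if "k \<in> {1..n}" for k
      using that by (simp flip: power_add)
    then show ?thesis
      using sum.shift_bounds_cl_nat_ivl[of "\<lambda>k. \<Sum>l\<in>{1..2 ^ (k - 1)}. w (k, l)" 1 m n]
      by (simp add: add.commute)
  qed
  also have "\<dots> = (\<Sum>k\<in>{1..n}. \<Sum>i\<in>{0..<2 ^ m}. \<Sum>j\<in>{1..2 ^ (k - 1)}. w (m + k, i * 2 ^ (k - 1) + j))"
    by (simp add: sum_int_blocks)
  also have "\<dots> = (\<Sum>i\<in>{0..<2 ^ m}. \<Sum>k\<in>{1..n}. \<Sum>j\<in>{1..2 ^ (k - 1)}. w (m + k, i * 2 ^ (k - 1) + j))"
    by (rule sum.swap)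
  also have "\<dots> = (\<Sum>i\<in>{0..<2 ^ m}. \<Sum>p\<in>dyadic_index 1 n. w (dyadic_shift m i p))"
    unfolding dyadic_index_eq_Sigma dyadic_shift_def by (subst sum.Sigma) (auto simp: prod.case_distrib)
  finally show ?thesis .
qed

lemma power2_L2_set_dyadic_shift:
  "(L2_set f (dyadic_index (m + 1) (m + n)))\<^sup>2 =
   (\<Sum>i\<in>{0..<(2::int) ^ m}. (L2_set (f \<circ> dyadic_shift m i) (dyadic_index 1 n))\<^sup>2)"
  unfolding L2_set_def sum_dyadic_index_shift by (simp add: sum_nonneg)

lemma haar_sum_dyadic_shift:
  "haar_sum (dyadic_index (m + 1) (m + n)) v t =
   (\<Sum>i\<in>{0..<(2::int) ^ m}. 2 powr (real m / 2) *\<^sub>R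
      haar_sum (dyadic_index 1 n) (v \<circ> dyadic_shift m i) (2 ^ m * t - i))"
  unfolding haar_sum_def sum_dyadic_index_shift scaleR_sum_right
proof (intro sum.cong refl)
  fix i :: int and p assume i: "i \<in> {0..<2 ^ m}" and p: "p \<in> dyadic_index 1 n"
  then obtain k j where "p = (k, j)" and k: "1 \<le> k" and j: "1 \<le> j" "j \<le> 2 ^ (k - 1)"
    by (auto simp: dyadic_index_def)
  moreover have "0 \<le> i" "i < 2 ^ m" using i by auto
  ultimately show "(case dyadic_shift m i p of (k, j) \<Rightarrow> haar k j t *\<^sub>R v (k, j)) =
    2 powr (real m / 2) *\<^sub>R (case p of (k, j) \<Rightarrow> haar k j (2 ^ m * t - i) *\<^sub>R (v \<circ> dyadic_shift m i) (k, j))"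
    using haar_dilate[OF k _ _ j, of i m t] by (simp add: dyadic_shift_def)
qed

lemma norm_haar_sum_dyadic_shift:
  "(norm (haar_sum (dyadic_index (m + 1) (m + n)) v t))\<^sup>2 =
   (\<Sum>i\<in>{0..<(2::int) ^ m}. 2 ^ m * (norm (haar_sum (dyadic_index 1 n) (v \<circ> dyadic_shift m i) (2 ^ m * t - i)))\<^sup>2)"
proof -
  have supp: "haar_sum (dyadic_index 1 n) (v \<circ> dyadic_shift m i) (2 ^ m * t - i) = 0"
    if "i \<noteq> \<lfloor>2 ^ m * t\<rfloor>" for i
  proof (rule haar_sum_eq_0)
    show "2 ^ m * t - i \<notin> {0..<1}" using that floor_eq_iff[of "2 ^ m * t" i] by auto
  qed
  have "(norm (haar_sum (dyadic_index (m + 1) (m + n)) v t))\<^sup>2 =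
    (\<Sum>i\<in>{0..<(2::int) ^ m}. (norm (2 powr (real m / 2) *\<^sub>R
       haar_sum (dyadic_index 1 n) (v \<circ> dyadic_shift m i) (2 ^ m * t - i)))\<^sup>2)"
    unfolding haar_sum_dyadic_shift
    by (rule norm_sum_power2_single_support[where a = "\<lfloor>2 ^ m * t\<rfloor>"]) (use supp in simp_all)
  moreover have "(2 powr (real m / 2))\<^sup>2 = (2::real) ^ m"
    by (simp add: power2_eq_square powr_realpow flip: powr_add)
  ultimately show ?thesis by (simp add: power_mult_distrib)
qed

lemma integral_norm_haar_sum_dyadic_shift:
  "(\<integral>t. (norm (haar_sum (dyadic_index (m + 1) (m + n)) v t))\<^sup>2 \<partial>lborel) =
   (\<Sum>i\<in>{0..<(2::int) ^ m}. \<integral>s. (norm (haar_sum (dyadic_index 1 n) (v \<circ> dyadic_shift m i) s))\<^sup>2 \<partial>lborel)"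
proof -
  define h where "h i s = (norm (haar_sum (dyadic_index 1 n) (v \<circ> dyadic_shift m i) s))\<^sup>2" for i :: int and s
  have c: "(2::real) ^ m \<noteq> 0" by simp
  have shift: "2 ^ m * t - real_of_int i = - real_of_int i + 2 ^ m * t" for t i by simp
  have int: "integrable lborel (\<lambda>t. 2 ^ m * h i (2 ^ m * t - i))" for i
  proof -
    have "integrable lborel (h i)"
      unfolding h_def by (rule integrable_norm_haar_sum[OF finite_dyadic_index])
    then show ?thesis
      unfolding shift using lborel_integrable_real_affine_iff[OF c, of "h i" "- real_of_int i"] by simp
  qed
  have affine: "(\<integral>t. 2 ^ m * h i (2 ^ m * t - i) \<partial>lborel) = (\<integral>s. h i s \<partial>lborel)" for i
    unfolding shift using lborel_integral_real_affine[OF c, of "h i" "- real_of_int i"] by simp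
  have "(\<integral>t. (norm (haar_sum (dyadic_index (m + 1) (m + n)) v t))\<^sup>2 \<partial>lborel) =
      (\<integral>t. (\<Sum>i\<in>{0..<(2::int) ^ m}. 2 ^ m * h i (2 ^ m * t - i)) \<partial>lborel)"
    unfolding norm_haar_sum_dyadic_shift h_def ..
  also have "\<dots> = (\<Sum>i\<in>{0..<(2::int) ^ m}. \<integral>t. 2 ^ m * h i (2 ^ m * t - i) \<partial>lborel)"
    by (rule Bochner_Integration.integral_sum) (rule int)
  also have "\<dots> = (\<Sum>i\<in>{0..<(2::int) ^ m}. \<integral>s. h i s \<partial>lborel)" unfolding affine ..
  finally show ?thesis unfolding h_def .
qed

lemma L2_norm01_haar_sum_dyadic_shift:
  "(L2_norm01 (haar_sum (dyadic_index (m + 1) (m + n)) v))\<^sup>2 =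
   (\<Sum>i\<in>{0..<(2::int) ^ m}. (L2_norm01 (haar_sum (dyadic_index 1 n) (v \<circ> dyadic_shift m i)))\<^sup>2)"
  unfolding L2_norm01_haar_sum integral_norm_haar_sum_dyadic_shift
  by (simp add: sum_nonneg integral_nonneg)

definition haar_admissible ::
  "('a::real_normed_vector \<Rightarrow> 'b::real_normed_vector) \<Rightarrow> (nat \<times> int) set \<Rightarrow> real \<Rightarrow> bool" where
  "haar_admissible T F c \<longleftrightarrow>
     0 \<le> c \<and> (\<forall>x. L2_norm01 (haar_sum F (T \<circ> x)) \<le> c * L2_set (\<lambda>p. norm (x p)) F)"

lemma haar_tau_eq_Inf: "haar_tau T F = Inf (Collect (haar_admissible T F))"
  unfolding haar_tau_def haar_admissible_def haar_sum_def[abs_def] L2_set_def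
  by (simp add: case_prod_beta)

lemma haar_admissible_dyadic_shift:
  fixes T :: "'a::real_normed_vector \<Rightarrow> 'b::real_normed_vector"
  assumes "haar_admissible T (dyadic_index 1 n) c"
  shows "haar_admissible T (dyadic_index (m + 1) (m + n)) c"
  unfolding haar_admissible_def
proof (intro conjI allI)
  show c: "0 \<le> c" using assms by (simp add: haar_admissible_def)
  fix x :: "nat \<times> int \<Rightarrow> 'a"
  define N where "N = (\<lambda>p. norm (x p))"
  have "(L2_norm01 (haar_sum (dyadic_index (m + 1) (m + n)) (T \<circ> x)))\<^sup>2 =
      (\<Sum>i\<in>{0..<(2::int) ^ m}. (L2_norm01 (haar_sum (dyadic_index 1 n) (T \<circ> (x \<circ> dyadic_shift m i))))\<^sup>2)"
    unfolding L2_norm01_haar_sum_dyadic_shift by (simp add: comp_assoc)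
  also have "\<dots> \<le> (\<Sum>i\<in>{0..<(2::int) ^ m}. (c * L2_set (N \<circ> dyadic_shift m i) (dyadic_index 1 n))\<^sup>2)"
  proof (intro sum_mono power_mono)
    fix i
    show "L2_norm01 (haar_sum (dyadic_index 1 n) (T \<circ> (x \<circ> dyadic_shift m i))) \<le>
        c * L2_set (N \<circ> dyadic_shift m i) (dyadic_index 1 n)"
      using assms by (simp add: haar_admissible_def N_def comp_def)
  qed (rule L2_norm01_nonneg)
  also have "\<dots> = (c * L2_set N (dyadic_index (m + 1) (m + n)))\<^sup>2"
    unfolding power_mult_distrib power2_L2_set_dyadic_shift sum_distrib_left ..
  finally show "L2_norm01 (haar_sum (dyadic_index (m + 1) (m + n)) (T \<circ> x)) \<le>
      c * L2_set (\<lambda>p. norm (x p)) (dyadic_index (m + 1) (m + n))"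
    unfolding N_def using c by (auto intro: power2_le_imp_le)
qed

(* The only place where T must be bounded: otherwise no constant may be admissible, and
   haar_tau would be the junk value Inf {}. *)
lemma haar_admissible_exists:
  fixes T :: "'a::real_normed_vector \<Rightarrow> 'b::real_normed_vector"
  assumes T: "bounded_linear T" and F: "finite F"
  shows "\<exists>c. haar_admissible T F c"
proof -
  obtain K where K: "0 < K" "\<And>y. norm (T y) \<le> norm y * K"
    using bounded_linear.pos_bounded[OF T] by blast
  define c where "c = K * (\<Sum>(k, j)\<in>F. 2 powr ((real k - 1) / 2))"
  have "haar_admissible T F c"
    unfolding haar_admissible_def
  proof (intro conjI allI)
    show "0 \<le> c" using K by (simp add: c_def sum_nonneg case_prod_beta)
    fix x :: "nat \<times> int \<Rightarrow> 'a"
    have "L2_norm01 (haar_sum F (T \<circ> x)) \<le> (\<Sum>(k, j)\<in>F. 2 powr ((real k - 1) / 2) * norm (T (x (k, j))))"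
      using L2_norm01_haar_sum_le[OF F, of "T \<circ> x"] by simp
    also have "\<dots> \<le> (\<Sum>(k, j)\<in>F. 2 powr ((real k - 1) / 2) * (K * L2_set (\<lambda>p. norm (x p)) F))"
    proof (intro sum_mono, clarify, intro mult_left_mono)
      fix k j assume "(k, j) \<in> F"
      then have "norm (x (k, j)) \<le> L2_set (\<lambda>p. norm (x p)) F" by (rule member_le_L2_set[OF F])
      then have "norm (x (k, j)) * K \<le> L2_set (\<lambda>p. norm (x p)) F * K" using K(1) by simp
      then show "norm (T (x (k, j))) \<le> K * L2_set (\<lambda>p. norm (x p)) F"
        using K(2)[of "x (k, j)"] by (simp add: mult.commute)
    qed simp
    also have "\<dots> = c * L2_set (\<lambda>p. norm (x p)) F"
      by (simp add: c_def case_prod_beta sum_distrib_left sum_distrib_right mult_ac)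
    finally show "L2_norm01 (haar_sum F (T \<circ> x)) \<le> c * L2_set (\<lambda>p. norm (x p)) F" .
  qed
  then show ?thesis ..
qed

theorem corollary3p2:
  fixes m n :: nat and T :: "'a::banach \<Rightarrow> 'b::banach"
  assumes "bounded_linear T"
  shows "haar_tau T (dyadic_index (m + 1) (m + n)) \<le> haar_tau T (dyadic_index 1 n)"
proof -
  have "Collect (haar_admissible T (dyadic_index 1 n)) \<noteq> {}"
    using haar_admissible_exists[OF assms finite_dyadic_index] by blast
  moreover have "bdd_below (Collect (haar_admissible T (dyadic_index (m + 1) (m + n))))"
    by (rule bdd_belowI[of _ 0]) (simp add: haar_admissible_def)
  moreover have "Collect (haar_admissible T (dyadic_index 1 n)) \<subseteq>
      Collect (haar_admissible T (dyadic_index (m + 1) (m + n)))"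
    using haar_admissible_dyadic_shift by blast
  ultimately show ?thesis unfolding haar_tau_eq_Inf by (rule cInf_superset_mono)
qed

end
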